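(* Let $n\ge1$, $k>0$, let $F$ be a complex polynomial of degree exactly $n$ having all its zeros in the closed disk $|z|\le k$, and let $P\in\mathscr P_n$ satisfy $|P(z)|\le|F(z)|$ for $|z|=k$. Then for all $\alpha,\beta\in\mathbb C$ with $|\alpha|\le1$, $|\beta|\le1$, all $R>r\ge k$ and all $|z|\ge1$, $$\big|B[P\circ\sigma](z)+\Phi_k(R,r,\alpha,\beta)B[P\circ\rho](z)\big|\le\big|B[F\circ\sigma](z)+\Phi_k(R,r,\alpha,\beta)B[F\circ\rho](z)\big|.$$ The inequality is sharp: equality holds for $P=e^{i\gamma}F$, $\gamma\in\mathbb R$.
   Context: For an integer $n\ge1$, $\mathscr P_n$ denotes the set of complex polynomials of degree at most $n$. Fix complex numbers $\lambda_0,\lambda_1,\lambda_2$ such that all zeros of $U(z)=\lambda_0+n\lambda_1 z+\frac{n(n-1)}{2}\lambda_2 z^2$ lie in the half-plane $\{z\in\mathbb C:|z|\le|z-n/2|\}$. The operator $B$ (of the class $\mathcal B_n$) sends $P\in\mathscr P_n$ to $B[P](z)=\lambda_0P(z)+\lambda_1\frac{nz}{2}P'(z)+\lambda_2\left(\frac{nz}{2}\right)^2\frac{P''(z)}{2!}$. For a polynomial $P$ and a map $\rho$, $P\circ\rho$ denotes $z\mapsto P(\rho(z))$, and $B[P\circ\rho](z)$ is $B$ applied to the polynomial $P\circ\rho$, evaluated at $z$. For $k>0$, $R,r>0$ and $\alpha,\beta\in\mathbb C$: $\Phi_k(R,r,\alpha,\beta)=\beta\left\{\left(\frac{R+k}{k+r}\right)^n-|\alpha|\right\}-\alpha$;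 and $\sigma(z)=Rz$, $\rho(z)=rz$. *)

theory Defs
  imports "HOL-Analysis.Analysis" "HOL-Computational_Algebra.Polynomial"
begin

definition B_op :: "nat \<Rightarrow> complex \<Rightarrow> complex \<Rightarrow> complex \<Rightarrow> complex poly \<Rightarrow> complex \<Rightarrow> complex" where
  "B_op n l0 l1 l2 P z =
     l0 * poly P z
     + l1 * (of_nat n * z / 2) * poly (pderiv P) z
     + l2 * (of_nat n * z / 2)^2 * poly (pderiv (pderiv P)) z / 2"

definition U_poly :: "nat \<Rightarrow> complex \<Rightarrow> complex \<Rightarrow> complex \<Rightarrow> complex \<Rightarrow> complex" where
  "U_poly n l0 l1 l2 z = l0 + of_nat n * l1 * z + of_nat n * (of_nat n - 1) / 2 * l2 * z^2"

definition Phi :: "nat \<Rightarrow> real \<Rightarrow> real \<Rightarrow> real \<Rightarrow> complex \<Rightarrow> complex \<Rightarrow> complex" where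
  "Phi n k R r \<alpha> \<beta> = \<beta> * complex_of_real (((R + k) / (k + r))^n - cmod \<alpha>) - \<alpha>"

definition scale_arg :: "complex poly \<Rightarrow> real \<Rightarrow> complex poly" where
  "scale_arg P c = pcompose P [:0, complex_of_real c:]"

end

theory Submission
  imports Defs
    "HOL-Computational_Algebra.Fundamental_Theorem_Algebra"
    "HOL-Complex_Analysis.Conformal_Mappings"
begin

text \<open>
  If T has degree n and all zeros in the closed unit disc, then \<open>B[T]\<close> has no zero in
  \<open>|z| > 1\<close>: with \<open>v\<^sub>i = z/(z - a\<^sub>i)\<close> over the zeros \<open>a\<^sub>i\<close> of T one has \<open>Re v\<^sub>i > 1/2\<close> and
  \<open>B[T](z) = T(z) (\<lambda>\<^sub>0 + \<lambda>\<^sub>1 (n/2) e\<^sub>1(v) + \<lambda>\<^sub>2 (n/2)\<^sup>2 e\<^sub>2(v))\<close>, and the location of the zeros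
  of U excludes the vanishing of the second factor. For S of degree n with zeros in \<open>|z| \<le> k\<close>,
  each linear factor grows by more than the factor \<open>(R+k)/(r+k)\<close> when the argument is dilated
  from \<open>rz\<close> to \<open>Rz\<close>, \<open>|z| > 1\<close>; as \<open>|\<Phi>| \<le> ((R+k)/(r+k))\<^sup>n\<close>, the polynomial \<open>S(Rz) + \<Phi> S(rz)\<close>
  again has all zeros in the closed unit disc.

  The maximum principle, applied to reciprocal polynomials, turns \<open>|P| \<le> |F|\<close> on \<open>|z| = k\<close> into:
  \<open>P - \<mu>F\<close> has degree n and all zeros in \<open>|z| \<le> k\<close> whenever \<open>|\<mu>| > 1\<close>. If the inequality failed
  at a point \<open>|z| > 1\<close>, the quotient \<open>\<mu>\<close> of its two sides would make the expression for
  \<open>P - \<mu>F\<close> vanish there. The case \<open>|z| = 1\<close> follows by continuity.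
\<close>

lemma poly_scale_arg [simp]: "poly (scale_arg p c) z = poly p (of_real c * z)"
  by (simp add: scale_arg_def poly_pcompose mult.commute)

lemma scale_arg_smult: "scale_arg (smult a p) c = smult a (scale_arg p c)"
  by (simp add: scale_arg_def pcompose_smult)

lemma scale_arg_diff: "scale_arg (p - q) c = scale_arg p c - scale_arg q c"
  by (simp add: scale_arg_def pcompose_diff)

lemma coeff_scale_arg: "coeff (scale_arg p c) i = of_real c ^ i * coeff p i"
  by (simp add: scale_arg_def coeff_pcompose_linear)

lemma degree_scale_arg_le: "degree (scale_arg p c) \<le> degree p"
  unfolding scale_arg_def by (simp add: degree_pcompose)

lemma B_op_add: "B_op n l0 l1 l2 (p + q) z = B_op n l0 l1 l2 p z + B_op n l0 l1 l2 q z"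
  by (simp add: B_op_def pderiv_add algebra_simps add_divide_distrib)

lemma B_op_smult: "B_op n l0 l1 l2 (smult a p) z = a * B_op n l0 l1 l2 p z"
  by (simp add: B_op_def pderiv_smult algebra_simps)

lemma B_op_diff: "B_op n l0 l1 l2 (p - q) z = B_op n l0 l1 l2 p z - B_op n l0 l1 l2 q z"
  by (simp add: B_op_def pderiv_diff algebra_simps diff_divide_distrib)

lemma continuous_on_B_op: "continuous_on S (B_op n l0 l1 l2 p)"
  unfolding B_op_def
  by (intro continuous_on_add continuous_on_mult continuous_on_divide continuous_on_power
      continuous_on_const continuous_on_id continuous_on_poly) simp_all

lemma complex_poly_linear_factor:
  fixes p :: "complex poly"
  assumes "degree p > 0"
  obtains a q where "p = [:-a,1:] * q" "degree q = degree p - 1" "poly p a = 0"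
proof -
  have "\<not> constant (poly p)" using assms constant_degree[of p] by simp
  from Fundamental_Theorem_Algebra.fundamental_theorem_of_algebra[OF this]
  obtain a where a: "poly p a = 0" ..
  then have "[:-a,1:] dvd p" by (simp add: poly_eq_0_iff_dvd)
  then obtain q where q: "p = [:-a,1:] * q" by (rule dvdE)
  have "p \<noteq> 0" using assms by auto
  then have "q \<noteq> 0" using q by auto
  then have "degree p = 1 + degree q" unfolding q by (subst degree_mult_eq) auto
  then show ?thesis using that q a by simp
qed

subsection \<open>The operator B outside the unit disc\<close>

fun elem_sym2 :: "complex list \<Rightarrow> complex" where
  "elem_sym2 [] = 0"
| "elem_sym2 (v # vs) = elem_sym2 vs + v * sum_list vs"

lemma elem_sym2_eq: "2 * elem_sym2 vs = (sum_list vs)^2 - sum_list (map (\<lambda>v. v^2) vs)"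
  by (induction vs) (simp_all add: power2_eq_square algebra_simps)

lemma Re_sum_list_gt_half_length:
  assumes "vs \<noteq> []" "\<forall>v\<in>set vs. Re v > 1/2"
  shows "Re (sum_list vs) > real (length vs) / 2"
  using assms
proof (induction vs)
  case (Cons v vs)
  then show ?case by (cases "vs = []") auto
qed simp

lemma Re_div_diff_gt_half:
  fixes z a :: complex
  assumes "cmod a \<le> 1" "cmod z > 1"
  shows "Re (z / (z - a)) > 1/2"
proof -
  have a: "(Re a)^2 + (Im a)^2 \<le> 1" using assms(1)
    by (metis cmod_power2 norm_ge_zero power_le_one_iff)
  have z: "(Re z)^2 + (Im z)^2 > 1" using assms(2)
    by (metis cmod_power2 less_1_mult power2_eq_square)
  have "z - a \<noteq> 0" using assms by auto
  then have pos: "(Re (z - a))^2 + (Im (z - a))^2 > 0" using complex_neq_0 by blast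
  have "Re (z / (z - a)) = (Re z * Re (z - a) + Im z * Im (z - a)) / ((Re (z - a))^2 + (Im (z - a))^2)"
    by (simp add: Re_divide)
  moreover have "Re z * Re (z - a) + Im z * Im (z - a) > 1/2 * ((Re (z - a))^2 + (Im (z - a))^2)"
    using a z by (simp add: power2_eq_square algebra_simps)
  ultimately show ?thesis using pos by (simp add: less_divide_eq)
qed

text \<open>The list \<open>vs\<close> consists of the numbers \<open>z/(z - a)\<close>, \<open>a\<close> running through the zeros of T.\<close>

lemma log_derivative_sums:
  fixes T :: "complex poly"
  assumes "T \<noteq> 0" "\<And>a. poly T a = 0 \<Longrightarrow> cmod a \<le> 1" "cmod z > 1"
  shows "\<exists>vs. length vs = degree T \<and> (\<forall>v\<in>set vs. Re v > 1/2)
     \<and> z * poly (pderiv T) z = poly T z * sum_list vs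
     \<and> z^2 * poly (pderiv (pderiv T)) z = 2 * poly T z * elem_sym2 vs
     \<and> poly T z \<noteq> 0"
  using assms
proof (induction "degree T" arbitrary: T)
  case 0
  then obtain c where c: "T = [:c:]" by (metis degree_eq_zeroE)
  with 0 have "c \<noteq> 0" by auto
  then show ?case using c by (intro exI[of _ "[]"]) auto
next
  case (Suc d)
  then have "degree T > 0" by simp
  then obtain a Q where TQ: "T = [:-a,1:] * Q" and dQ: "degree Q = degree T - 1"
    and ra: "poly T a = 0"
    by (rule complex_poly_linear_factor)
  have Q0: "Q \<noteq> 0" using Suc.prems TQ by auto
  have rootsQ: "cmod b \<le> 1" if "poly Q b = 0" for b
    using Suc.prems(2)[of b] that TQ by simp
  have dd: "d = degree Q" using Suc.hyps(2) dQ by simp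
  obtain vs where vs: "length vs = degree Q" "\<forall>v\<in>set vs. Re v > 1/2"
     "z * poly (pderiv Q) z = poly Q z * sum_list vs"
     "z^2 * poly (pderiv (pderiv Q)) z = 2 * poly Q z * elem_sym2 vs"
     "poly Q z \<noteq> 0"
    using Suc.hyps(1)[OF dd Q0 rootsQ Suc.prems(3)] by blast
  have a1: "cmod a \<le> 1" using Suc.prems(2) ra by blast
  have za: "z - a \<noteq> 0" using a1 Suc.prems(3) by auto
  define v where "v = z / (z - a)"
  have vre: "Re v > 1/2" unfolding v_def using Re_div_diff_gt_half a1 Suc.prems(3) by blast
  have zv: "z = (z - a) * v" unfolding v_def using za by simp
  have pT: "poly T z = (z - a) * poly Q z" unfolding TQ by (simp add: algebra_simps)
  have pT1: "poly (pderiv T) z = poly Q z + (z - a) * poly (pderiv Q) z"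
    unfolding TQ pderiv_mult by (simp add: pderiv_pCons algebra_simps)
  have pT2: "poly (pderiv (pderiv T)) z
      = 2 * poly (pderiv Q) z + (z - a) * poly (pderiv (pderiv Q)) z"
    unfolding TQ pderiv_mult pderiv_add by (simp add: pderiv_pCons algebra_simps)
  show ?case
  proof (intro exI[of _ "v # vs"] conjI)
    show "length (v # vs) = degree T" using vs(1) dQ Suc.hyps(2) by simp
    show "\<forall>w\<in>set (v # vs). Re w > 1/2" using vs(2) vre by simp
    have "z * poly (pderiv T) z = z * poly Q z + (z - a) * (z * poly (pderiv Q) z)"
      by (simp add: pT1 algebra_simps)
    also have "\<dots> = (z - a) * v * poly Q z + (z - a) * (poly Q z * sum_list vs)"
      using vs(3) zv by simp
    finally show "z * poly (pderiv T) z = poly T z * sum_list (v # vs)"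
      by (simp add: pT algebra_simps)
    have "z^2 * poly (pderiv (pderiv T)) z
        = 2 * z * (z * poly (pderiv Q) z) + (z - a) * (z^2 * poly (pderiv (pderiv Q)) z)"
      by (simp add: pT2 algebra_simps power2_eq_square)
    also have "\<dots> = 2 * ((z - a) * v) * (poly Q z * sum_list vs)
        + (z - a) * (2 * poly Q z * elem_sym2 vs)"
      using vs(3) vs(4) zv by simp
    finally show "z^2 * poly (pderiv (pderiv T)) z = 2 * poly T z * elem_sym2 (v # vs)"
      by (simp add: pT algebra_simps)
    show "poly T z \<noteq> 0" using pT za vs(5) by simp
  qed
qed

lemma sum_squares_less_square_sum:
  fixes t :: "nat \<Rightarrow> real"
  assumes "n \<ge> 2" "\<And>i. i < n \<Longrightarrow> t i > 0"
  shows "(\<Sum>i<n. (t i)^2) < (\<Sum>i<n. t i)^2"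
  using assms
proof (induction n rule: nat_induct_at_least)
  case base
  have "t 0 > 0" "t 1 > 0" using base by auto
  then show ?case by (simp add: numeral_2_eq_2 power2_eq_square algebra_simps)
next
  case (Suc m)
  have IH: "(\<Sum>i<m. (t i)^2) < (\<Sum>i<m. t i)^2" using Suc by auto
  have pos: "(\<Sum>i<m. t i) > 0" using Suc by (intro sum_pos) auto
  have tm: "t m > 0" using Suc by auto
  have "(\<Sum>i<Suc m. (t i)^2) = (\<Sum>i<m. (t i)^2) + (t m)^2" by simp
  also have "\<dots> < (\<Sum>i<m. t i)^2 + (t m)^2" using IH by simp
  also have "\<dots> \<le> (\<Sum>i<m. t i)^2 + 2 * (\<Sum>i<m. t i) * t m + (t m)^2" using pos tm by simp
  also have "\<dots> = (\<Sum>i<Suc m. t i)^2" by (simp add: power2_eq_square algebra_simps)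
  finally show ?case .
qed

lemma sum_centred_products:
  fixes x y :: "nat \<Rightarrow> real"
  assumes "n > 0"
  shows "(\<Sum>i<n. (x i - (\<Sum>j<n. x j)/n) * (y i - (\<Sum>j<n. y j)/n))
       = (\<Sum>i<n. x i * y i) - (\<Sum>i<n. x i) * (\<Sum>i<n. y i) / n"
proof -
  define a where "a = (\<Sum>j<n. x j)/n"
  define b where "b = (\<Sum>j<n. y j)/n"
  have "(\<Sum>i<n. (x i - a) * (y i - b))
      = (\<Sum>i<n. x i * y i) - b*(\<Sum>i<n. x i) - a*(\<Sum>i<n. y i) + n*a*b"
    by (simp add: algebra_simps sum.distrib sum_subtractf sum_distrib_left sum_distrib_right)
  also have "\<dots> = (\<Sum>i<n. x i * y i) - (\<Sum>i<n. x i) * (\<Sum>i<n. y i) / n"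
    using assms unfolding a_def b_def by (simp add: field_simps)
  finally show ?thesis unfolding a_def b_def .
qed

lemma centred_moments_inside_parabola:
  fixes x y :: "nat \<Rightarrow> real"
  assumes n: "n \<ge> 2" and x: "\<And>i. i < n \<Longrightarrow> x i > 1/2"
  defines "(X::real) \<equiv> \<Sum>i<n. x i" and "(Y::real) \<equiv> \<Sum>i<n. y i"
  defines "(A::real) \<equiv> (\<Sum>i<n. (x i)^2) - X^2/real n" and "(B::real) \<equiv> (\<Sum>i<n. (y i)^2) - Y^2/real n"
    and "(C::real) \<equiv> (\<Sum>i<n. x i * y i) - X * Y/real n"
  defines "(G::real) \<equiv> (X - real n/2)^2"
  shows "4 * (real n - 1) * G * (real n * (A - B)) + (2 * real n * C)^2 < 4 * (real n - 1)^2 * G^2"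
proof -
  have n0: "real n > 0" using n by simp
  have cA: "A = (\<Sum>i<n. (x i - X/n)^2)"
    using sum_centred_products[of n x x] n unfolding A_def X_def by (simp add: power2_eq_square)
  have cB: "B = (\<Sum>i<n. (y i - Y/n)^2)"
    using sum_centred_products[of n y y] n unfolding B_def Y_def by (simp add: power2_eq_square)
  have cC: "C = (\<Sum>i<n. (x i - X/n) * (y i - Y/n))"
    using sum_centred_products[of n x y] n unfolding C_def X_def Y_def by simp
  have A0: "A \<ge> 0" and B0: "B \<ge> 0" unfolding cA cB by (auto intro: sum_nonneg)
  have CS: "C^2 \<le> A * B"
    unfolding cA cB cC using Cauchy_Schwarz_ineq_sum[of "\<lambda>i. x i - X/n" "\<lambda>i. y i - Y/n" "{..<n}"]
    by (simp add: power2_eq_square)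
  define M where "M = (real n - 1) * G / real n"
  have "(\<Sum>i<n. (x i - 1/2)^2) < (\<Sum>i<n. x i - 1/2)^2"
    using sum_squares_less_square_sum[OF n, of "\<lambda>i. x i - 1/2"] x by simp
  moreover have "(\<Sum>i<n. x i - 1/2) = X - n/2" unfolding X_def by (simp add: sum_subtractf)
  moreover have "(\<Sum>i<n. (x i - 1/2)^2) = (\<Sum>i<n. (x i)^2) - X + n/4"
    unfolding X_def
    by (simp add: power2_diff sum_subtractf sum.distrib sum_distrib_left algebra_simps power2_eq_square)
  ultimately have "A < (X - real n/2)^2 + X - n/4 - X^2/real n" unfolding A_def by simp
  also have "\<dots> = M" unfolding M_def G_def using n0 by (simp add: field_simps power2_eq_square)
  finally have AM: "A < M" .
  have "M * (A - B) + C^2 \<le> M * (A - B) + A * B" using CS by simp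
  also have "\<dots> = M^2 - (M - A) * (M + B)" by (simp add: algebra_simps power2_eq_square)
  also have "\<dots> < M^2" using AM A0 B0 by (simp add: add_pos_nonneg)
  finally have lt: "4 * (real n)^2 * (M * (A - B) + C^2) < 4 * (real n)^2 * M^2" using n0 by simp
  have nM: "real n * M = (real n - 1) * G" unfolding M_def using n0 by simp
  have "4 * (real n - 1) * G * (real n * (A - B)) = 4 * ((real n - 1) * G) * (real n * (A - B))"
    by (simp only: mult.assoc)
  also have "\<dots> = 4 * (real n)^2 * (M * (A - B))"
    unfolding nM[symmetric] by (simp add: power2_eq_square algebra_simps)
  finally have "4 * (real n - 1) * G * (real n * (A - B)) + (2 * real n * C)^2
      = 4 * (real n)^2 * (M * (A - B) + C^2)"
    by (simp add: power2_eq_square algebra_simps)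
  moreover have "4 * (real n - 1)^2 * G^2 = 4 * ((real n - 1) * G)^2"
    by (simp add: power_mult_distrib)
  moreover have "\<dots> = 4 * (real n)^2 * M^2" unfolding nM[symmetric] by (simp add: power_mult_distrib)
  ultimately show ?thesis using lt by simp
qed

lemma centred_square_sum_inside_parabola:
  fixes vs :: "complex list"
  assumes n: "n \<ge> 2" and len: "length vs = n" and re: "\<forall>v\<in>set vs. Re v > 1/2"
  defines "D \<equiv> of_nat n * sum_list (map (\<lambda>v. v^2) vs) - (sum_list vs)^2"
    and "(G::real) \<equiv> (Re (sum_list vs) - real n/2)^2"
  shows "4 * (real n - 1) * G * Re D + (Im D)^2 < 4 * (real n - 1)^2 * G^2"
proof -
  define x where "x i = Re (vs ! i)" for i
  define y where "y i = Im (vs ! i)" for i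
  define X where "X = (\<Sum>i<n. x i)"
  define Y where "Y = (\<Sum>i<n. y i)"
  have n0: "real n > 0" using n by simp
  have s1: "sum_list vs = (\<Sum>i<n. vs ! i)"
    using len by (simp add: sum_list_sum_nth lessThan_atLeast0)
  have s2: "sum_list (map (\<lambda>v. v^2) vs) = (\<Sum>i<n. (vs ! i)^2)"
    using len by (simp add: sum_list_sum_nth lessThan_atLeast0)
  have ReS1: "Re (sum_list vs) = X" and ImS1: "Im (sum_list vs) = Y"
    unfolding s1 X_def Y_def x_def y_def by (simp_all add: Re_sum Im_sum)
  have "Re D = real n * ((\<Sum>i<n. (x i)^2) - (\<Sum>i<n. (y i)^2)) - (X^2 - Y^2)"
    unfolding D_def s2 ReS1[symmetric] ImS1[symmetric] x_def y_def
    by (simp add: Re_sum power2_eq_square sum_subtractf)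
  also have "\<dots> = real n * (((\<Sum>i<n. (x i)^2) - X^2/real n) - ((\<Sum>i<n. (y i)^2) - Y^2/real n))"
    using n0 by (simp add: field_simps)
  finally have ReD: "Re D = \<dots>" .
  have "Im D = real n * (2 * (\<Sum>i<n. x i * y i)) - 2 * X * Y"
    unfolding D_def s2 ReS1[symmetric] ImS1[symmetric] x_def y_def
    by (simp add: Im_sum power2_eq_square sum_distrib_left mult.commute)
  also have "\<dots> = 2 * real n * ((\<Sum>i<n. x i * y i) - X * Y/real n)"
    using n0 by (simp add: field_simps)
  finally have ImD: "Im D = \<dots>" .
  have "\<And>i. i < n \<Longrightarrow> x i > 1/2" using re len unfolding x_def by (simp add: nth_mem)
  then show ?thesis
    using centred_moments_inside_parabola[of n x y] n unfolding G_def ReS1 ReD ImD X_def Y_def by blast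
qed

text \<open>The region \<open>4g\<^sup>2 Re w + (Im w)\<^sup>2 \<ge> 4g\<^sup>4\<close> outside the parabola is the image of the
  half-plane \<open>Re w \<ge> g\<close> under squaring; it also contains all products of two of its points.\<close>

lemma halfplane_product_outside_parabola:
  fixes p q :: complex and g :: real
  assumes g: "g > 0" and p: "Re p \<ge> g" and q: "Re q \<ge> g"
  shows "4 * g^2 * Re (p * q) + (Im (p * q))^2 \<ge> 4 * g^4"
proof -
  define s where "s = Re p - g"
  define t where "t = Re q - g"
  have s0: "s \<ge> 0" and t0: "t \<ge> 0" using p q by (auto simp: s_def t_def)
  define d where "d = Im q - Im p"
  define e where "e = Im q + Im p"
  define \<sigma> where "\<sigma> = s + t"
  define \<delta> where "\<delta> = s - t"
  define a where "a = 4*g^2 + \<delta>^2"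
  define b where "b = \<delta> * (2*g + \<sigma>)"
  define c where "c = 4*g*\<sigma> + \<sigma>^2"
  have expand: "4 * (4 * g^2 * Re (p * q) + (Im (p * q))^2)
      = 16*g^4 + 16*g^3*\<sigma> + 16*g^2*(s*t) + (a*d^2 + 2*b*d*e + c*e^2)"
    unfolding s_def t_def d_def e_def \<sigma>_def \<delta>_def a_def b_def c_def
    by (simp add: power2_eq_square power4_eq_xxxx power3_eq_cube algebra_simps)
  have a0: "a > 0" unfolding a_def using g by (simp add: add_pos_nonneg)
  have "a * (a*d^2 + 2*b*d*e + c*e^2) = (a*d + b*e)^2 + (16*g^2*(g*\<sigma> + s*t))*e^2"
    unfolding a_def b_def c_def \<sigma>_def \<delta>_def by (simp add: power2_eq_square algebra_simps)
  also have "\<dots> \<ge> 0" using g s0 t0 unfolding \<sigma>_def by simp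
  finally have "a*d^2 + 2*b*d*e + c*e^2 \<ge> 0" using a0 by (simp add: zero_le_mult_iff)
  moreover have "16*g^3*\<sigma> + 16*g^2*(s*t) \<ge> 0" using g s0 t0 unfolding \<sigma>_def by simp
  ultimately have "4 * (4 * g^4) \<le> 4 * (4 * g^2 * Re (p * q) + (Im (p * q))^2)"
    using expand by linarith
  then show ?thesis by simp
qed

lemma U_poly_root_Re_le:
  assumes "n > 0" "\<And>z. U_poly n l0 l1 l2 z = 0 \<Longrightarrow> cmod z \<le> cmod (z - of_nat n / 2)"
    and "U_poly n l0 l1 l2 \<zeta> = 0"
  shows "Re \<zeta> \<le> real n / 4"
proof (rule ccontr)
  assume "\<not> Re \<zeta> \<le> real n / 4"
  then have "(Re \<zeta> - real n/2)^2 + (Im \<zeta>)^2 < (Re \<zeta>)^2 + (Im \<zeta>)^2"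
    using assms(1) by (simp add: power2_eq_square algebra_simps)
  then have "(cmod (\<zeta> - of_nat n / 2))^2 < (cmod \<zeta>)^2" by (simp add: cmod_power2)
  then have "cmod (\<zeta> - of_nat n / 2) < cmod \<zeta>" by (rule power_less_imp_less_base) simp
  with assms(2)[OF assms(3)] show False by simp
qed

lemma complex_quadratic_factor:
  fixes a b c :: complex
  assumes "c \<noteq> 0"
  obtains z1 z2 where "\<And>z. a + b*z + c*z^2 = c*(z - z1)*(z - z2)"
proof -
  define s where "s = csqrt (b^2 - 4*a*c)"
  have s2: "s^2 = b^2 - 4*a*c" unfolding s_def by simp
  define z1 where "z1 = (-b + s)/(2*c)"
  define z2 where "z2 = (-b - s)/(2*c)"
  have sum: "c*(z1 + z2) = -b" unfolding z1_def z2_def using assms by (simp add: field_simps)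
  have "c*(z1*z2) = (b^2 - s^2)/(4*c)" unfolding z1_def z2_def using assms
    by (simp add: field_simps power2_eq_square)
  also have "\<dots> = a" using s2 assms by (simp add: field_simps power2_eq_square)
  finally have prod: "c*(z1*z2) = a" .
  have "c*(z - z1)*(z - z2) = c*z^2 - c*(z1+z2)*z + c*(z1*z2)" for z
    by (simp add: power2_eq_square algebra_simps)
  then have "a + b*z + c*z^2 = c*(z - z1)*(z - z2)" for z
    unfolding sum prod by simp
  then show ?thesis by (rule that)
qed

lemma U_poly_half_sum_ne_quadratic:
  fixes vs :: "complex list"
  assumes n2: "n \<ge> 2" and l2: "l2 \<noteq> 0" and len: "length vs = n" and re: "\<forall>v\<in>set vs. Re v > 1/2"
    and U: "\<And>z. U_poly n l0 l1 l2 z = 0 \<Longrightarrow> cmod z \<le> cmod (z - of_nat n / 2)"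
  defines "s \<equiv> sum_list vs"
  defines "D \<equiv> of_nat n * sum_list (map (\<lambda>v. v^2) vs) - s^2"
  shows "U_poly n l0 l1 l2 (s/2) \<noteq> l2 * of_nat n/8 * D"
proof
  assume UD: "U_poly n l0 l1 l2 (s/2) = l2 * of_nat n/8 * D"
  have n0: "n > 0" using n2 by simp
  define c where "c = of_nat n * (of_nat n - 1) / 2 * l2"
  have "c \<noteq> 0" unfolding c_def using l2 n2 by simp
  then obtain z1 z2 where fac: "\<And>z. l0 + (of_nat n * l1) * z + c * z^2 = c * (z - z1) * (z - z2)"
    using complex_quadratic_factor by blast
  have U_fac: "U_poly n l0 l1 l2 z = c * (z - z1) * (z - z2)" for z
    using fac[of z] unfolding U_poly_def c_def by (simp add: algebra_simps)
  define p where "p = s/2 - z1"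
  define q where "q = s/2 - z2"
  define g where "g = Re s/2 - real n/4"
  have "vs \<noteq> []" using len n2 by auto
  then have "Re s > real n/2"
    using Re_sum_list_gt_half_length[of vs] re len unfolding s_def by simp
  then have g0: "g > 0" unfolding g_def by simp
  have "Re p \<ge> g" "Re q \<ge> g"
    using U_poly_root_Re_le[OF n0 U, where \<zeta> = z1] U_poly_root_Re_le[OF n0 U, where \<zeta> = z2]
      U_fac[of z1] U_fac[of z2]
    unfolding p_def q_def g_def by auto
  from halfplane_product_outside_parabola[OF g0 this]
  have outside: "4 * g^2 * Re (p * q) + (Im (p * q))^2 \<ge> 4 * g^4" .
  have "l2 * of_nat n/8 * D = c * p * q"
    using UD U_fac[of "s/2"] unfolding p_def q_def by simp
  also have "\<dots> = l2 * of_nat n/8 * (4 * (of_nat n - 1) * (p * q))"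
    unfolding c_def by (simp add: field_simps)
  finally have D: "D = 4 * (of_nat n - 1) * (p * q)" using l2 n0 by simp
  have "4 * (real n - 1)^2 * (4 * g^2)^2 = 16 * (real n - 1)^2 * (4 * g^4)"
    by (simp add: power2_eq_square power4_eq_xxxx)
  also have "\<dots> \<le> 16 * (real n - 1)^2 * (4 * g^2 * Re (p * q) + (Im (p * q))^2)"
    using outside by (intro mult_left_mono) auto
  also have "\<dots> = 4 * (real n - 1) * (4 * g^2) * Re D + (Im D)^2"
    unfolding D using n2 by (simp add: power2_eq_square algebra_simps)
  finally have "4 * (real n - 1)^2 * (4 * g^2)^2 \<le> 4 * (real n - 1) * (4 * g^2) * Re D + (Im D)^2" .
  moreover have "4 * g^2 = (Re s - real n/2)^2"
    unfolding g_def by (simp add: power2_eq_square algebra_simps)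
  ultimately show False
    using centred_square_sum_inside_parabola[OF n2 len re] unfolding D_def s_def by simp
qed

lemma B_multiplier_nonzero:
  fixes vs :: "complex list"
  assumes n: "n \<ge> 1" and len: "length vs = n" and re: "\<forall>v\<in>set vs. Re v > 1/2"
    and U: "\<And>z. U_poly n l0 l1 l2 z = 0 \<Longrightarrow> cmod z \<le> cmod (z - of_nat n / 2)"
  shows "l0 + l1 * (of_nat n/2) * sum_list vs + l2 * (of_nat n^2/4) * elem_sym2 vs \<noteq> 0"
proof -
  define s where "s = sum_list vs"
  define D where "D = of_nat n * sum_list (map (\<lambda>v. v^2) vs) - s^2"
  have e2: "elem_sym2 vs = (s^2 - sum_list (map (\<lambda>v. v^2) vs)) / 2"
    using elem_sym2_eq[of vs] unfolding s_def by (simp add: mult.commute)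
  have eq: "l0 + l1 * (of_nat n/2) * sum_list vs + l2 * (of_nat n^2/4) * elem_sym2 vs
      = U_poly n l0 l1 l2 (s/2) - l2 * of_nat n/8 * D"
    unfolding s_def[symmetric] e2 U_poly_def D_def by (simp add: field_simps power2_eq_square)
  have "U_poly n l0 l1 l2 (s/2) \<noteq> l2 * of_nat n/8 * D"
  proof (cases "l2 = 0 \<or> n = 1")
    case True
    have "vs \<noteq> []" using len n by auto
    then have "Re s > real n/2"
      using Re_sum_list_gt_half_length[of vs] re len unfolding s_def by simp
    then have "U_poly n l0 l1 l2 (s/2) \<noteq> 0"
      using U_poly_root_Re_le[OF _ U, where \<zeta> = "s/2"] n by auto
    moreover have "D = 0" if "n = 1"
      using len that unfolding D_def s_def by (cases vs) auto
    ultimately show ?thesis using True by auto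
  next
    case False
    then show ?thesis
      using U_poly_half_sum_ne_quadratic[OF _ _ len re U] n unfolding s_def D_def by auto
  qed
  then show ?thesis unfolding eq by simp
qed

lemma B_op_nonzero_outside_unit_disc:
  fixes T :: "complex poly"
  assumes n: "n \<ge> 1" and U: "\<And>z. U_poly n l0 l1 l2 z = 0 \<Longrightarrow> cmod z \<le> cmod (z - of_nat n / 2)"
    and dT: "degree T = n" and rT: "\<And>a. poly T a = 0 \<Longrightarrow> cmod a \<le> 1" and z: "cmod z > 1"
  shows "B_op n l0 l1 l2 T z \<noteq> 0"
proof -
  have "T \<noteq> 0" using dT n by auto
  then obtain vs where vs: "length vs = degree T" "\<forall>v\<in>set vs. Re v > 1/2"
     "z * poly (pderiv T) z = poly T z * sum_list vs"
     "z^2 * poly (pderiv (pderiv T)) z = 2 * poly T z * elem_sym2 vs"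
     "poly T z \<noteq> 0"
    using log_derivative_sums[OF _ rT z] by blast
  have "B_op n l0 l1 l2 T z = l0 * poly T z + l1 * (of_nat n/2) * (z * poly (pderiv T) z)
        + l2 * (of_nat n^2/4) * (z^2 * poly (pderiv (pderiv T)) z) / 2"
    unfolding B_op_def by (simp add: power_mult_distrib power_divide algebra_simps)
  also have "\<dots> = poly T z
      * (l0 + l1 * (of_nat n/2) * sum_list vs + l2 * (of_nat n^2/4) * elem_sym2 vs)"
    unfolding vs(3) vs(4) by (simp add: algebra_simps)
  finally show ?thesis using vs(5) B_multiplier_nonzero[OF n _ vs(2) U] vs(1) dT by simp
qed

subsection \<open>Dilation of polynomials with zeros in a disc\<close>

lemma dilation_linear_factor_ineq:
  fixes z a :: complex and k r R :: real
  assumes k: "k > 0" "k \<le> r" "r < R" and a: "cmod a \<le> k" and z: "cmod z > 1"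
  shows "(R + k)/(r + k) * cmod (of_real r * z - a) < cmod (of_real R * z - a)"
proof -
  define t where "t = cmod z"
  define s where "s = cmod a"
  define x where "x = Re z * Re a + Im z * Im a"
  have sq: "(cmod (of_real c * z - a))^2 = c^2 * t^2 - 2 * c * x + s^2" for c :: real
    unfolding t_def s_def x_def cmod_power2 by (simp add: power2_eq_square algebra_simps)
  have xts: "x + t * s \<ge> 0"
  proof -
    have "Re (z * cnj a) = x" unfolding x_def by simp
    moreover have "\<bar>Re (z * cnj a)\<bar> \<le> cmod (z * cnj a)" by (rule abs_Re_le_cmod)
    moreover have "cmod (z * cnj a) = t * s" unfolding t_def s_def by (simp add: norm_mult)
    ultimately show ?thesis by linarith
  qed
  have t1: "t > 1" using z t_def by simp
  have s0: "s \<ge> 0" "s \<le> k" using a s_def by auto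
  define L where "L = (R + k) * cmod (of_real r * z - a)"
  define M where "M = (r + k) * cmod (of_real R * z - a)"
  have "M^2 - L^2
      = (r+k)^2 * (R^2 * t^2 - 2 * R * x + s^2) - (R+k)^2 * (r^2 * t^2 - 2 * r * x + s^2)"
    unfolding L_def M_def power_mult_distrib sq by simp
  \<comment> \<open>both summands are nonnegative, the second positive since \<open>|a| \<le> k < k|z|\<close>\<close>
  also have "\<dots> = 2 * (x + t * s) * ((R - r) * (r * R - k^2))
      + (R - r) * (k * t - s) * ((r+k) * (R * t + s) + (R+k) * (r * t + s))"
    by (simp add: power2_eq_square algebra_simps)
  also have "\<dots> > 0"
  proof -
    have "r * R - k^2 \<ge> 0" using k by (simp add: power2_eq_square mult_mono)
    then have "2 * (x + t * s) * ((R - r) * (r * R - k^2)) \<ge> 0" using xts k by simp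
    moreover have "k * t > k" using t1 k by simp
    then have "k * t - s > 0" using s0 by linarith
    moreover have "(r+k) * (R * t + s) + (R+k) * (r * t + s) > 0"
    proof -
      have "(r+k) * (R * t + s) > 0" using k t1 s0 by (intro mult_pos_pos add_pos_nonneg) auto
      moreover have "(R+k) * (r * t + s) > 0" using k t1 s0 by (intro mult_pos_pos add_pos_nonneg) auto
      ultimately show ?thesis by simp
    qed
    ultimately show ?thesis using k by (simp add: add_nonneg_pos)
  qed
  finally have "L^2 < M^2" by simp
  moreover have "M \<ge> 0" unfolding M_def using k by simp
  ultimately have "L < M" by (simp add: power_less_imp_less_base)
  then show ?thesis unfolding L_def M_def using k by (simp add: field_simps)
qed

lemma dilation_poly_ineq:
  fixes S :: "complex poly" and k r R :: real
  assumes k: "k > 0" "k \<le> r" "r < R" and S0: "S \<noteq> 0"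
    and rS: "\<And>a. poly S a = 0 \<Longrightarrow> cmod a \<le> k" and z: "cmod z > 1"
  shows "((R + k)/(r + k))^(degree S) * cmod (poly S (of_real r * z)) \<le> cmod (poly S (of_real R * z))
         \<and> poly S (of_real R * z) \<noteq> 0"
  using S0 rS
proof (induction "degree S" arbitrary: S)
  case 0
  then obtain c where c: "S = [:c:]" by (metis degree_eq_zeroE)
  with 0 have "c \<noteq> 0" by auto
  then show ?case using c by simp
next
  case (Suc d)
  then have "degree S > 0" by simp
  then obtain a Q where SQ: "S = [:-a,1:] * Q" and dQ: "degree Q = degree S - 1" and ra: "poly S a = 0"
    by (rule complex_poly_linear_factor)
  have Q0: "Q \<noteq> 0" using Suc.prems SQ by auto
  have rootsQ: "cmod b \<le> k" if "poly Q b = 0" for b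
    using Suc.prems(2)[of b] that SQ by simp
  have dd: "d = degree Q" using Suc.hyps(2) dQ by simp
  have IH: "((R + k)/(r + k))^d * cmod (poly Q (of_real r * z)) \<le> cmod (poly Q (of_real R * z))
         \<and> poly Q (of_real R * z) \<noteq> 0"
    using Suc.hyps(1)[OF dd Q0 rootsQ] dd by simp
  have a: "cmod a \<le> k" using Suc.prems(2) ra by blast
  have fi: "(R + k)/(r + k) * cmod (of_real r * z - a) < cmod (of_real R * z - a)"
    using dilation_linear_factor_ineq[OF k a z] .
  have q0: "(R + k)/(r + k) \<ge> 0" using k by simp
  have nn: "(R + k)/(r + k) * cmod (of_real r * z - a) \<ge> 0" using k by simp
  have pS: "poly S w = (w - a) * poly Q w" for w unfolding SQ by (simp add: algebra_simps)
  have "((R + k)/(r + k))^(degree S) * cmod (poly S (of_real r * z))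
      = ((R + k)/(r + k) * cmod (of_real r * z - a)) * (((R + k)/(r + k))^d * cmod (poly Q (of_real r * z)))"
    unfolding Suc.hyps(2)[symmetric] pS by (simp add: norm_mult mult_ac)
  also have "\<dots> \<le> cmod (of_real R * z - a) * cmod (poly Q (of_real R * z))"
    using fi IH q0 by (intro mult_mono) auto
  also have "\<dots> = cmod (poly S (of_real R * z))" unfolding pS by (simp add: norm_mult)
  finally have 1: "((R + k)/(r + k))^(degree S) * cmod (poly S (of_real r * z)) \<le> cmod (poly S (of_real R * z))" .
  have "of_real R * z - a \<noteq> 0" using fi nn by auto
  then have "poly S (of_real R * z) \<noteq> 0" using IH unfolding pS by simp
  with 1 show ?case by blast
qed

lemma dilation_poly_ineq_strict:
  fixes S :: "complex poly" and k r R :: real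
  assumes k: "k > 0" "k \<le> r" "r < R" and dS: "degree S > 0"
    and rS: "\<And>a. poly S a = 0 \<Longrightarrow> cmod a \<le> k" and z: "cmod z > 1"
  shows "((R + k)/(r + k))^(degree S) * cmod (poly S (of_real r * z)) < cmod (poly S (of_real R * z))"
proof -
  obtain a Q where SQ: "S = [:-a,1:] * Q" and dQ: "degree Q = degree S - 1" and ra: "poly S a = 0"
    using dS by (rule complex_poly_linear_factor)
  have Q0: "Q \<noteq> 0" using dS SQ by auto
  have rootsQ: "cmod b \<le> k" if "poly Q b = 0" for b
    using rS[of b] that SQ by simp
  have IH: "((R + k)/(r + k))^(degree Q) * cmod (poly Q (of_real r * z)) \<le> cmod (poly Q (of_real R * z))
         \<and> poly Q (of_real R * z) \<noteq> 0"
    using dilation_poly_ineq[OF k Q0 rootsQ z] .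
  have a: "cmod a \<le> k" using rS ra by blast
  have fi: "(R + k)/(r + k) * cmod (of_real r * z - a) < cmod (of_real R * z - a)"
    using dilation_linear_factor_ineq[OF k a z] .
  have nn: "(R + k)/(r + k) * cmod (of_real r * z - a) \<ge> 0" using k by simp
  have pS: "poly S w = (w - a) * poly Q w" for w unfolding SQ by (simp add: algebra_simps)
  have dS': "degree S = Suc (degree Q)" using dQ dS by simp
  have "((R + k)/(r + k))^(degree S) * cmod (poly S (of_real r * z))
      = ((R + k)/(r + k) * cmod (of_real r * z - a)) * (((R + k)/(r + k))^(degree Q) * cmod (poly Q (of_real r * z)))"
    unfolding dS' pS by (simp add: norm_mult mult_ac)
  also have "\<dots> \<le> ((R + k)/(r + k) * cmod (of_real r * z - a)) * cmod (poly Q (of_real R * z))"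
    using IH nn by (intro mult_left_mono) auto
  also have "\<dots> < cmod (of_real R * z - a) * cmod (poly Q (of_real R * z))"
    using fi IH by (intro mult_strict_right_mono) auto
  also have "\<dots> = cmod (poly S (of_real R * z))" unfolding pS by (simp add: norm_mult)
  finally show ?thesis .
qed

lemma degree_dilation_combination:
  fixes S :: "complex poly" and k r R :: real
  assumes n: "n \<ge> 1" and k: "k > 0" "k \<le> r" "r < R" and dS: "degree S = n"
    and Phi: "cmod \<Phi> \<le> ((R + k)/(r + k))^n"
  shows "degree (scale_arg S R + smult \<Phi> (scale_arg S r)) = n"
proof (rule antisym)
  show "degree (scale_arg S R + smult \<Phi> (scale_arg S r)) \<le> n" using dS
    by (intro degree_add_le order.trans[OF degree_smult_le] degree_scale_arg_le
        order.trans[OF degree_scale_arg_le]) auto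
next
  define q where "q = (R + k)/(r + k)"
  have "cmod (\<Phi> * of_real r ^ n) \<le> q^n * r^n"
    using Phi k unfolding q_def by (simp add: norm_mult norm_power mult_right_mono)
  also have "\<dots> = (q * r)^n" by (simp add: power_mult_distrib)
  also have "\<dots> < R^n"
  proof -
    have "q * r < R" unfolding q_def using k by (simp add: field_simps)
    then show ?thesis using k n unfolding q_def by (intro power_strict_mono) auto
  qed
  finally have lt: "cmod (\<Phi> * of_real r ^ n) < R^n" .
  have "of_real R ^ n + \<Phi> * of_real r ^ n \<noteq> (0::complex)"
  proof
    assume "of_real R ^ n + \<Phi> * of_real r ^ n = (0::complex)"
    then have "cmod (\<Phi> * of_real r ^ n) = cmod (of_real R ^ n :: complex)"
      by (metis add_eq_0_iff norm_minus_cancel)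
    then show False using lt k by (simp add: norm_power)
  qed
  moreover have "coeff S n \<noteq> 0" using dS n by (metis leading_coeff_0_iff not_one_le_zero degree_0)
  moreover have "coeff (scale_arg S R + smult \<Phi> (scale_arg S r)) n
      = coeff S n * (of_real R ^ n + \<Phi> * of_real r ^ n)"
    by (simp add: coeff_scale_arg algebra_simps)
  ultimately show "n \<le> degree (scale_arg S R + smult \<Phi> (scale_arg S r))"
    by (intro le_degree) simp
qed

lemma B_combination_nonzero:
  fixes S :: "complex poly" and k r R :: real
  assumes n: "n \<ge> 1" and U: "\<And>z. U_poly n l0 l1 l2 z = 0 \<Longrightarrow> cmod z \<le> cmod (z - of_nat n / 2)"
    and k: "k > 0" "k \<le> r" "r < R" and dS: "degree S = n"
    and rS: "\<And>a. poly S a = 0 \<Longrightarrow> cmod a \<le> k"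
    and Phi: "cmod \<Phi> \<le> ((R + k)/(r + k))^n" and z0: "cmod z0 > 1"
  shows "B_op n l0 l1 l2 (scale_arg S R) z0 + \<Phi> * B_op n l0 l1 l2 (scale_arg S r) z0 \<noteq> 0"
proof -
  define T where "T = scale_arg S R + smult \<Phi> (scale_arg S r)"
  have BT: "B_op n l0 l1 l2 T z0
      = B_op n l0 l1 l2 (scale_arg S R) z0 + \<Phi> * B_op n l0 l1 l2 (scale_arg S r) z0"
    unfolding T_def by (simp add: B_op_add B_op_smult)
  define q where "q = (R + k)/(r + k)"
  have rT: "cmod z \<le> 1" if "poly T z = 0" for z
  proof (rule ccontr)
    assume "\<not> cmod z \<le> 1"
    then have z1: "cmod z > 1" by simp
    have str: "q^n * cmod (poly S (of_real r * z)) < cmod (poly S (of_real R * z))"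
      using dilation_poly_ineq_strict[of k r R S z, OF k _ rS z1] dS n unfolding q_def by simp
    have "poly S (of_real R * z) = - \<Phi> * poly S (of_real r * z)"
      using that unfolding T_def by (simp add: algebra_simps add_eq_0_iff)
    then have "cmod (poly S (of_real R * z)) = cmod \<Phi> * cmod (poly S (of_real r * z))"
      by (simp add: norm_mult)
    also have "\<dots> \<le> q^n * cmod (poly S (of_real r * z))"
      using Phi unfolding q_def by (intro mult_right_mono) auto
    finally show False using str by simp
  qed
  have dT: "degree T = n"
    unfolding T_def using degree_dilation_combination[OF n k dS Phi] .
  show ?thesis using B_op_nonzero_outside_unit_disc[of n l0 l1 l2 T z0, OF n U dT rT z0] BT by simp
qed

subsection \<open>The inequality on the circle \<open>|z| = k\<close> propagates outward\<close>

lemma poly_ratio_max_modulus: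
  fixes A G :: "complex poly"
  assumes G: "\<And>u. cmod u \<le> 1 \<Longrightarrow> poly G u \<noteq> 0"
    and bd: "\<And>u. cmod u = 1 \<Longrightarrow> cmod (poly A u) \<le> cmod (poly G u)"
    and u: "cmod u \<le> 1"
  shows "cmod (poly A u) \<le> cmod (poly G u)"
proof -
  have "cmod (poly A u / poly G u) \<le> 1"
  proof (rule maximum_modulus_frontier[where f = "\<lambda>u. poly A u / poly G u" and S = "cball 0 1"])
    show "(\<lambda>u. poly A u / poly G u) holomorphic_on interior (cball 0 1)"
      using G by (intro holomorphic_intros) auto
    show "continuous_on (closure (cball 0 1)) (\<lambda>u. poly A u / poly G u)"
      using G by (intro continuous_intros) auto
    show "cmod (poly A w / poly G w) \<le> 1" if "w \<in> frontier (cball 0 1)" for w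
      using that bd[of w] G[of w] by (simp add: norm_divide divide_le_eq)
  qed (use u in auto)
  then show ?thesis using G[OF u] by (simp add: norm_divide divide_le_eq)
qed

lemma circle_ineq_at_excluded_point:
  fixes A G :: "complex poly"
  assumes "cmod \<zeta> = 1"
    and ineq: "\<And>v. cmod v = 1 \<Longrightarrow> v \<noteq> \<zeta> \<Longrightarrow> cmod (poly A v) \<le> cmod (poly G v)"
  shows "cmod (poly A \<zeta>) \<le> cmod (poly G \<zeta>)"
proof -
  define g where "g t = cmod (poly G (\<zeta> * cis t)) - cmod (poly A (\<zeta> * cis t))" for t
  have "continuous_on (closure {0<..<1::real}) g" unfolding g_def
    by (intro continuous_intros)
  moreover have "(0::real) \<in> closure {0<..<1::real}" by simp
  moreover have "0 \<le> g t" if t: "t \<in> {0<..<1::real}" for t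
  proof -
    have "sin t > 0" using t pi_gt3 by (intro sin_gt_zero) auto
    then have "cis t \<noteq> 1" by (metis cis.sel(2) one_complex.sel(2) less_irrefl)
    then have "\<zeta> * cis t \<noteq> \<zeta>" using assms(1) by auto
    moreover have "cmod (\<zeta> * cis t) = 1" using assms(1) by (simp add: norm_mult)
    ultimately show ?thesis using ineq unfolding g_def by simp
  qed
  ultimately have "0 \<le> g 0" by (rule continuous_ge_on_closure)
  then show ?thesis unfolding g_def by simp
qed

text \<open>Zeros of G on the unit circle are zeros of A as well, so they can be divided out.\<close>

lemma poly_ratio_max_modulus_open_disc:
  fixes A G :: "complex poly"
  assumes "\<And>u. cmod u < 1 \<Longrightarrow> poly G u \<noteq> 0" and "G \<noteq> 0"
    and "\<And>u. cmod u = 1 \<Longrightarrow> cmod (poly A u) \<le> cmod (poly G u)"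
    and "cmod u < 1"
  shows "cmod (poly A u) \<le> cmod (poly G u)"
  using assms
proof (induction "degree G" arbitrary: A G rule: less_induct)
  case less
  show ?case
  proof (cases "\<exists>\<zeta>. cmod \<zeta> = 1 \<and> poly G \<zeta> = 0")
    case False
    then have "poly G v \<noteq> 0" if "cmod v \<le> 1" for v
      using less.prems(1)[of v] that by (cases "cmod v = 1") auto
    then show ?thesis using poly_ratio_max_modulus less.prems(3,4) by fastforce
  next
    case True
    then obtain \<zeta> where \<zeta>: "cmod \<zeta> = 1" "poly G \<zeta> = 0" by blast
    have "poly A \<zeta> = 0" using less.prems(3)[OF \<zeta>(1)] \<zeta>(2) by simp
    then obtain A1 where A1: "A = [:-\<zeta>,1:] * A1" using poly_eq_0_iff_dvd by (metis dvdE)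
    obtain G1 where G1: "G = [:-\<zeta>,1:] * G1" using \<zeta>(2) poly_eq_0_iff_dvd by (metis dvdE)
    have G10: "G1 \<noteq> 0" using G1 less.prems(2) by auto
    have "degree ([:-\<zeta>,1:] * G1) = degree [:-\<zeta>,1:] + degree G1"
      by (rule degree_mult_eq) (use G10 in auto)
    then have deg: "degree G1 < degree G" using G1 by simp
    have pG: "poly G v = (v - \<zeta>) * poly G1 v" for v unfolding G1 by (simp add: algebra_simps)
    have pA: "poly A v = (v - \<zeta>) * poly A1 v" for v unfolding A1 by (simp add: algebra_simps)
    have G1_nz: "poly G1 v \<noteq> 0" if "cmod v < 1" for v using less.prems(1)[OF that] pG by auto
    have bd1: "cmod (poly A1 v) \<le> cmod (poly G1 v)" if "cmod v = 1" "v \<noteq> \<zeta>" for v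
      using less.prems(3)[OF that(1)] that unfolding pA pG by (simp add: norm_mult)
    have "cmod (poly A1 v) \<le> cmod (poly G1 v)" if "cmod v = 1" for v
      using bd1 that circle_ineq_at_excluded_point[OF \<zeta>(1), of A1 G1] by (cases "v = \<zeta>") auto
    then have "cmod (poly A1 u) \<le> cmod (poly G1 u)"
      using less.hyps[OF deg G1_nz G10 _ less.prems(4)] by blast
    then show ?thesis unfolding pA pG by (simp add: norm_mult mult_left_mono)
  qed
qed

text \<open>For \<open>degree P \<le> n\<close> this is the polynomial \<open>u\<^sup>n P(k/u)\<close>.\<close>

definition reciprocal_poly :: "nat \<Rightarrow> real \<Rightarrow> complex poly \<Rightarrow> complex poly" where
  "reciprocal_poly n k P = (\<Sum>j\<le>n. monom (coeff P j * of_real k ^ j) (n - j))"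

lemma poly_reciprocal_poly_0: "poly (reciprocal_poly n k P) 0 = coeff P n * of_real k ^ n"
proof -
  have "{..n} = insert n {..<n}" by auto
  moreover have "(\<Sum>j<n. coeff P j * of_real k ^ j * (0::complex) ^ (n - j)) = 0"
    by (intro sum.neutral) auto
  ultimately show ?thesis unfolding reciprocal_poly_def by (simp add: poly_sum poly_monom)
qed

lemma poly_reciprocal_poly:
  assumes "degree P \<le> n" "u \<noteq> 0"
  shows "poly (reciprocal_poly n k P) u = u ^ n * poly P (of_real k / u)"
proof -
  have "poly P x = (\<Sum>j\<le>n. coeff P j * x ^ j)" for x
  proof -
    have "poly (\<Sum>j\<le>n. monom (coeff P j) j) x = (\<Sum>j\<le>n. coeff P j * x ^ j)"
      by (simp add: poly_sum poly_monom)
    then show ?thesis unfolding poly_as_sum_of_monoms'[OF assms(1)] .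
  qed
  then have "u ^ n * poly P (of_real k / u) = (\<Sum>j\<le>n. u ^ n * (coeff P j * (of_real k / u) ^ j))"
    by (simp add: sum_distrib_left)
  also have "\<dots> = (\<Sum>j\<le>n. coeff P j * of_real k ^ j * u ^ (n - j))"
  proof (rule sum.cong)
    fix j assume "j \<in> {..n}"
    then have "u ^ n = u ^ (n - j) * u ^ j" by (simp add: power_add[symmetric])
    then show "u ^ n * (coeff P j * (of_real k / u) ^ j) = coeff P j * of_real k ^ j * u ^ (n - j)"
      using assms(2) by (simp add: power_divide field_simps)
  qed simp
  finally show ?thesis unfolding reciprocal_poly_def by (simp add: poly_sum poly_monom)
qed

lemma reciprocal_poly_modulus_le:
  fixes P F :: "complex poly"
  assumes k: "k > 0" and F: "F \<noteq> 0" "degree F = n"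
    and zerosF: "\<And>z. poly F z = 0 \<Longrightarrow> cmod z \<le> k"
    and degP: "degree P \<le> n"
    and PF: "\<And>z. cmod z = k \<Longrightarrow> cmod (poly P z) \<le> cmod (poly F z)"
    and u: "cmod u < 1"
  shows "cmod (poly (reciprocal_poly n k P) u) \<le> cmod (poly (reciprocal_poly n k F) u)"
proof (rule poly_ratio_max_modulus_open_disc[OF _ _ _ u])
  have degF: "degree F \<le> n" using F by simp
  have k_div: "cmod (of_real k / u) = k / cmod u" for u using k by (simp add: norm_divide)
  have lead: "poly (reciprocal_poly n k F) 0 \<noteq> 0"
    unfolding poly_reciprocal_poly_0 using F k by (simp flip: F(2))
  then show "reciprocal_poly n k F \<noteq> 0" by auto
  show "poly (reciprocal_poly n k F) v \<noteq> 0" if "cmod v < 1" for v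
  proof (cases "v = 0")
    case False
    have "k / cmod v > k" using that False k by (simp add: less_divide_eq)
    then have "poly F (of_real k / v) \<noteq> 0" using zerosF k_div by (metis not_le)
    then show ?thesis using False by (simp add: poly_reciprocal_poly[OF degF])
  qed (use lead in simp)
  show "cmod (poly (reciprocal_poly n k P) v) \<le> cmod (poly (reciprocal_poly n k F) v)"
    if "cmod v = 1" for v
  proof -
    have "v \<noteq> 0" using that by auto
    moreover have "cmod (poly P (of_real k / v)) \<le> cmod (poly F (of_real k / v))"
      using PF k_div that by simp
    ultimately show ?thesis
      using that by (simp add: poly_reciprocal_poly[OF degP] poly_reciprocal_poly[OF degF]
          norm_mult norm_power)
  qed
qed

lemma diff_smult_zeros_in_disc:
  fixes P F :: "complex poly" and k :: real and \<mu> :: complex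
  assumes k: "k > 0" and F: "F \<noteq> 0" "degree F = n"
    and zerosF: "\<And>z. poly F z = 0 \<Longrightarrow> cmod z \<le> k"
    and degP: "degree P \<le> n"
    and PF: "\<And>z. cmod z = k \<Longrightarrow> cmod (poly P z) \<le> cmod (poly F z)"
    and \<mu>: "cmod \<mu> > 1"
  shows "degree (P - smult \<mu> F) = n" and "\<And>z. poly (P - smult \<mu> F) z = 0 \<Longrightarrow> cmod z \<le> k"
proof -
  have rec_le: "cmod (poly (reciprocal_poly n k P) u) \<le> cmod (poly (reciprocal_poly n k F) u)"
    if "cmod u < 1" for u
    using reciprocal_poly_modulus_le[of k F n P u] k F zerosF degP PF that by blast
  have lead: "coeff F n \<noteq> 0" using F(1) by (simp flip: F(2))
  have "cmod (coeff P n) \<le> cmod (coeff F n)"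
    using rec_le[of 0] k unfolding poly_reciprocal_poly_0 by (simp add: norm_mult norm_power)
  moreover have "cmod (\<mu> * coeff F n) > cmod (coeff F n)" using \<mu> lead by (simp add: norm_mult)
  ultimately have "coeff (P - smult \<mu> F) n \<noteq> 0" by auto
  moreover have "degree (P - smult \<mu> F) \<le> n" using degP F
    by (intro degree_diff_le) (auto intro: order.trans[OF degree_smult_le])
  ultimately show "degree (P - smult \<mu> F) = n" by (simp add: le_antisym le_degree)
  show "cmod z \<le> k" if "poly (P - smult \<mu> F) z = 0" for z
  proof (rule ccontr)
    assume "\<not> cmod z \<le> k"
    then have zk: "cmod z > k" and z0: "z \<noteq> 0" using k by auto
    define u where "u = of_real k / z"
    have u0: "u \<noteq> 0" unfolding u_def using k z0 by simp
    have u1: "cmod u < 1" unfolding u_def using zk k by (simp add: norm_divide divide_less_eq)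
    have ku: "of_real k / u = z" unfolding u_def using k z0 by simp
    have degF: "degree F \<le> n" using F(2) by simp
    have "cmod (poly (reciprocal_poly n k P) u) \<le> cmod (poly (reciprocal_poly n k F) u)"
      using rec_le[OF u1] .
    then have "cmod u ^ n * cmod (poly P z) \<le> cmod u ^ n * cmod (poly F z)"
      unfolding poly_reciprocal_poly[OF degP u0] poly_reciprocal_poly[OF degF u0] ku
      by (simp add: norm_mult norm_power)
    then have "cmod (poly P z) \<le> cmod (poly F z)" using u0 by simp
    moreover have "poly F z \<noteq> 0" using zerosF zk by (metis not_le)
    moreover have "poly P z = \<mu> * poly F z" using that by simp
    ultimately show False using \<mu> by (simp add: norm_mult)
  qed
qed

lemma norm_Phi_le:
  assumes k: "k > 0" "k \<le> r" "r < R" and \<alpha>: "cmod \<alpha> \<le> 1" and \<beta>: "cmod \<beta> \<le> 1"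
  shows "cmod (Phi n k R r \<alpha> \<beta>) \<le> ((R + k)/(r + k))^n"
proof -
  define q where "q = (R + k)/(r + k)"
  have "q \<ge> 1" unfolding q_def using k by simp
  then have qn: "q^n \<ge> 1" by simp
  have "Phi n k R r \<alpha> \<beta> = \<beta> * of_real (q^n - cmod \<alpha>) - \<alpha>"
    unfolding Phi_def q_def by (simp add: add.commute)
  then have "cmod (Phi n k R r \<alpha> \<beta>) \<le> cmod \<beta> * \<bar>q^n - cmod \<alpha>\<bar> + cmod \<alpha>"
    by (metis norm_mult norm_of_real norm_triangle_ineq4)
  also have "\<dots> \<le> 1 * (q^n - cmod \<alpha>) + cmod \<alpha>"
    using qn \<alpha> \<beta> by (intro add_mono mult_mono) auto
  finally show ?thesis unfolding q_def by simp
qed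

lemma B_combination_ineq_outside_unit_disc:
  fixes n :: nat and k R r :: real and l0 l1 l2 \<Phi> :: complex and F P :: "complex poly"
  assumes n: "n \<ge> 1"
    and U: "\<And>z. U_poly n l0 l1 l2 z = 0 \<Longrightarrow> cmod z \<le> cmod (z - of_nat n / 2)"
    and k: "k > 0" "k \<le> r" "r < R"
    and degF: "degree F = n"
    and zerosF: "\<And>z. poly F z = 0 \<Longrightarrow> cmod z \<le> k"
    and degP: "degree P \<le> n"
    and PF: "\<And>z. cmod z = k \<Longrightarrow> cmod (poly P z) \<le> cmod (poly F z)"
    and \<Phi>: "cmod \<Phi> \<le> ((R + k)/(r + k))^n"
    and w: "cmod w > 1"
  shows "cmod (B_op n l0 l1 l2 (scale_arg P R) w + \<Phi> * B_op n l0 l1 l2 (scale_arg P r) w)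
       \<le> cmod (B_op n l0 l1 l2 (scale_arg F R) w + \<Phi> * B_op n l0 l1 l2 (scale_arg F r) w)"
proof (rule ccontr)
  define L where "L X = B_op n l0 l1 l2 (scale_arg X R) w + \<Phi> * B_op n l0 l1 l2 (scale_arg X r) w"
    for X
  have F0: "F \<noteq> 0" using degF n by auto
  assume "\<not> ?thesis"
  then have gt: "cmod (L P) > cmod (L F)" unfolding L_def by simp
  have LF: "L F \<noteq> 0" unfolding L_def
    using B_combination_nonzero[of n l0 l1 l2 k r R F, OF n U k degF zerosF \<Phi> w] .
  define \<mu> where "\<mu> = L P / L F"
  have "cmod \<mu> > 1" unfolding \<mu>_def using gt LF by (simp add: norm_divide)
  then have S: "degree (P - smult \<mu> F) = n" "\<And>z. poly (P - smult \<mu> F) z = 0 \<Longrightarrow> cmod z \<le> k"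
    using diff_smult_zeros_in_disc[of k F n P \<mu>] k F0 degF zerosF degP PF by blast+
  have "L (P - smult \<mu> F) \<noteq> 0" unfolding L_def
    using B_combination_nonzero[of n l0 l1 l2 k r R "P - smult \<mu> F", OF n U k S \<Phi> w] .
  moreover have "L (P - smult \<mu> F) = L P - \<mu> * L F"
    unfolding L_def by (simp add: scale_arg_diff scale_arg_smult B_op_diff B_op_smult algebra_simps)
  ultimately show False unfolding \<mu>_def using LF by simp
qed

lemma nonneg_outside_unit_disc_extends_to_circle:
  fixes g :: "complex \<Rightarrow> real"
  assumes cont: "continuous_on UNIV g" and pos: "\<And>w. cmod w > 1 \<Longrightarrow> g w \<ge> 0"
    and z: "cmod z \<ge> 1"
  shows "g z \<ge> 0"
proof -
  define h where "h t = g (of_real (1 + t) * z)" for t :: real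
  have "continuous_on (closure {0<..<1::real}) h" unfolding h_def
    by (intro continuous_on_compose2[OF cont] continuous_intros) auto
  moreover have "(0::real) \<in> closure {0<..<1::real}" by simp
  moreover have "0 \<le> h t" if t: "t \<in> {0<..<1::real}" for t
  proof -
    have "cmod (of_real (1 + t) * z) = (1 + t) * cmod z"
      using t by (simp add: norm_mult abs_of_pos del: of_real_add)
    also have "\<dots> \<ge> 1 + t" using z t by simp
    finally show ?thesis unfolding h_def using pos t by simp
  qed
  ultimately have "0 \<le> h 0" by (rule continuous_ge_on_closure)
  then show ?thesis unfolding h_def by simp
qed

theorem theorem2p1:
  fixes n :: nat and k R r :: real and l0 l1 l2 :: complex
    and F P :: "complex poly"
  assumes n: "n \<ge> 1"
    and U: "\<And>z. U_poly n l0 l1 l2 z = 0 \<Longrightarrow> cmod z \<le> cmod (z - of_nat n / 2)"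
    and k: "k > 0"
    and degF: "degree F = n"
    and zerosF: "\<And>z. poly F z = 0 \<Longrightarrow> cmod z \<le> k"
    and degP: "degree P \<le> n"
    and PF: "\<And>z. cmod z = k \<Longrightarrow> cmod (poly P z) \<le> cmod (poly F z)"
  shows "(\<forall>\<alpha> \<beta> z. cmod \<alpha> \<le> 1 \<longrightarrow> cmod \<beta> \<le> 1 \<longrightarrow> R > r \<longrightarrow> r \<ge> k \<longrightarrow> cmod z \<ge> 1 \<longrightarrow>
            cmod (B_op n l0 l1 l2 (scale_arg P R) z
                  + Phi n k R r \<alpha> \<beta> * B_op n l0 l1 l2 (scale_arg P r) z)
            \<le> cmod (B_op n l0 l1 l2 (scale_arg F R) z
                  + Phi n k R r \<alpha> \<beta> * B_op n l0 l1 l2 (scale_arg F r) z))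
       \<and> (\<forall>\<gamma>::real. \<forall>\<alpha> \<beta> z.
            cmod (B_op n l0 l1 l2 (scale_arg (smult (cis \<gamma>) F) R) z
                  + Phi n k R r \<alpha> \<beta> * B_op n l0 l1 l2 (scale_arg (smult (cis \<gamma>) F) r) z)
            = cmod (B_op n l0 l1 l2 (scale_arg F R) z
                  + Phi n k R r \<alpha> \<beta> * B_op n l0 l1 l2 (scale_arg F r) z))"
proof -
  let ?L = "\<lambda>\<alpha> \<beta> X w. B_op n l0 l1 l2 (scale_arg X R) w
      + Phi n k R r \<alpha> \<beta> * B_op n l0 l1 l2 (scale_arg X r) w"
  have "cmod (?L \<alpha> \<beta> P z) \<le> cmod (?L \<alpha> \<beta> F z)"
    if \<alpha>: "cmod \<alpha> \<le> 1" and \<beta>: "cmod \<beta> \<le> 1" and "R > r" "r \<ge> k" and z: "cmod z \<ge> 1"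
    for \<alpha> \<beta> z
  proof -
    have kr: "k > 0" "k \<le> r" "r < R" using k that by auto
    have "continuous_on UNIV (\<lambda>w. cmod (?L \<alpha> \<beta> F w) - cmod (?L \<alpha> \<beta> P w))"
      by (intro continuous_intros continuous_on_B_op)
    moreover have "cmod (?L \<alpha> \<beta> F w) - cmod (?L \<alpha> \<beta> P w) \<ge> 0" if "cmod w > 1" for w
      using B_combination_ineq_outside_unit_disc[of n l0 l1 l2 k r R F P, OF n U kr degF zerosF
          degP PF norm_Phi_le[OF kr \<alpha> \<beta>] that] by simp
    ultimately show ?thesis using nonneg_outside_unit_disc_extends_to_circle[OF _ _ z] by force
  qed
  moreover have "?L \<alpha> \<beta> (smult (cis \<gamma>) F) z = cis \<gamma> * ?L \<alpha> \<beta> F z" for \<gamma> \<alpha> \<beta> z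
    by (simp add: scale_arg_smult B_op_smult algebra_simps)
  ultimately show ?thesis by (simp add: norm_mult)
qed

end
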